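(* Let $A, B \subseteq \mathbb{N}$ be oracles, $S_A$ a settled deployed system over $A$, and $S_B$ a settled deployed system over $B$ that is a successor system of $S_A$ (i.e. $A \leq_T B$). Let $D$ be a decision task that is externally essential relative to $S_A$, i.e. there is a set $E$ with $D \leq_T A \oplus E$ and $D \not\leq_T A$. If $S_B$ capability-internalizes $D$, i.e. $D$ is inference-realizable in $S_B$, then $A <_T B$.
   Context: $X \leq_T Y$ means some oracle Turing machine with oracle $Y$ computes the characteristic function of $X$; $A <_T B$ means $A \leq_T B$ and $B \not\leq_T A$; $A \oplus E$ is the join $\{2n : n\in A\}\cup\{2n+1 : n \in E\}$. For an oracle $C$, $\mathcal{C}(C)=\{X : X \leq_T C\}$. A settled deployed system over $C$ is a fixed effective family of procedures each of whose realizable decision tasks lies in $\mathcal{C}(C)$. An inference-time procedure of such a system is any task-realizing procedure obtained by finite composition of procedures already in the family, with no change to the family; a task is inference-realizable in the system if some inference-time procedure realizes (decides) it. *)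

theory Defs
  imports Main
begin

text \<open>A function of arity n is represented by a map on nat lists (only lists of length n matter).\<close>

inductive orec :: "nat set \<Rightarrow> nat \<Rightarrow> (nat list \<Rightarrow> nat) \<Rightarrow> bool" for X :: "nat set" where
  zero: "orec X n (\<lambda>_. 0)"
| succ: "orec X 1 (\<lambda>xs. Suc (hd xs))"
| proj: "i < n \<Longrightarrow> orec X n (\<lambda>xs. xs ! i)"
| orac: "orec X 1 (\<lambda>xs. if hd xs \<in> X then 1 else 0)"
| comp: "orec X m g \<Longrightarrow> length fs = m \<Longrightarrow> (\<forall>f\<in>set fs. orec X n f)
         \<Longrightarrow> orec X n (\<lambda>xs. g (map (\<lambda>f. f xs) fs))"
| prim_rec: "orec X n g \<Longrightarrow> orec X (n + 2) h
         \<Longrightarrow> orec X (Suc n) (\<lambda>xs. rec_nat (g (tl xs)) (\<lambda>k r. h (k # r # tl xs)) (hd xs))"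
| mu: "orec X (Suc n) f \<Longrightarrow> (\<forall>xs. length xs = n \<longrightarrow> (\<exists>y. f (y # xs) = 0))
         \<Longrightarrow> orec X n (\<lambda>xs. LEAST y. f (y # xs) = 0)"

definition computable_in :: "nat set \<Rightarrow> (nat \<Rightarrow> nat) \<Rightarrow> bool" where
  "computable_in Y p \<longleftrightarrow> (\<exists>f. orec Y 1 f \<and> (\<forall>x. f [x] = p x))"

definition decides :: "(nat \<Rightarrow> nat) \<Rightarrow> nat set \<Rightarrow> bool" where
  "decides p X \<longleftrightarrow> (\<forall>x. p x = (if x \<in> X then 1 else 0))"

definition turing_le :: "nat set \<Rightarrow> nat set \<Rightarrow> bool" (infix "\<le>\<^sub>T" 50) where
  "X \<le>\<^sub>T Y \<longleftrightarrow> computable_in Y (\<lambda>x. if x \<in> X then 1 else 0)"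

definition turing_less :: "nat set \<Rightarrow> nat set \<Rightarrow> bool" (infix "<\<^sub>T" 50) where
  "X <\<^sub>T Y \<longleftrightarrow> X \<le>\<^sub>T Y \<and> \<not> Y \<le>\<^sub>T X"

definition join :: "nat set \<Rightarrow> nat set \<Rightarrow> nat set" (infixl "\<oplus>" 65) where
  "A \<oplus> E = {2 * n | n. n \<in> A} \<union> {2 * n + 1 | n. n \<in> E}"

definition settled_system :: "nat set \<Rightarrow> (nat \<Rightarrow> nat) set \<Rightarrow> bool" where
  "settled_system C S \<longleftrightarrow>
     (\<forall>p\<in>S. computable_in C p) \<and> (\<forall>p\<in>S. \<forall>X. decides p X \<longrightarrow> X \<le>\<^sub>T C)"

inductive inference_proc :: "(nat \<Rightarrow> nat) set \<Rightarrow> (nat \<Rightarrow> nat) \<Rightarrow> bool" for S where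
  base: "p \<in> S \<Longrightarrow> inference_proc S p"
| compose: "inference_proc S p \<Longrightarrow> inference_proc S q \<Longrightarrow> inference_proc S (p \<circ> q)"

definition inference_realizable :: "(nat \<Rightarrow> nat) set \<Rightarrow> nat set \<Rightarrow> bool" where
  "inference_realizable S D \<longleftrightarrow> (\<exists>p. inference_proc S p \<and> decides p D)"

definition externally_essential :: "nat set \<Rightarrow> nat set \<Rightarrow> bool" where
  "externally_essential A D \<longleftrightarrow> (\<exists>E. D \<le>\<^sub>T A \<oplus> E) \<and> \<not> D \<le>\<^sub>T A"

end

theory Submission
  imports Defs
begin

(* An inference-realizable task of the system over B is a composition of B-computable
   procedures, hence computable from B. An externally essential D is not computable from A,
   so by transitivity of Turing reducibility B cannot be computable from A either. *)

(* Agreement can only be asked for on argument lists of the arity n: the replacement of the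
   oracle clause is an arbitrary Z-recursive function, fixed only on singleton lists. *)
lemma orec_relativize:
  assumes "orec Y n f" and "Y \<le>\<^sub>T Z"
  shows "\<exists>g. orec Z n g \<and> (\<forall>xs. length xs = n \<longrightarrow> g xs = f xs)"
  using assms(1)
proof (induction rule: orec.induct)
  case (zero n)
  then show ?case using orec.zero by blast
next
  case succ
  then show ?case using orec.succ by blast
next
  case (proj i n)
  then show ?case using orec.proj by blast
next
  case orac
  obtain g where "orec Z 1 g" "\<forall>x. g [x] = (if x \<in> Y then 1 else 0)"
    using assms(2) unfolding turing_le_def computable_in_def by blast
  moreover have "xs = [hd xs]" if "length xs = 1" for xs :: "nat list"
    using that by (cases xs) auto
  ultimately show ?case by (intro exI[of _ g]) metis
next
  case (comp m g fs n)
  obtain g' where g': "orec Z m g'" "\<forall>xs. length xs = m \<longrightarrow> g' xs = g xs"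
    using comp.IH(1) by blast
  have "\<forall>f\<in>set fs. \<exists>f'. orec Z n f' \<and> (\<forall>xs. length xs = n \<longrightarrow> f' xs = f xs)"
    using comp.IH(2) by blast
  then obtain \<phi> where \<phi>: "\<forall>f\<in>set fs. orec Z n (\<phi> f) \<and> (\<forall>xs. length xs = n \<longrightarrow> \<phi> f xs = f xs)"
    by (rule bchoice[elim_format]) blast
  have "orec Z n (\<lambda>xs. g' (map (\<lambda>f. f xs) (map \<phi> fs)))"
    by (rule orec.comp[OF g'(1)]) (use comp.hyps(2) \<phi> in auto)
  moreover have "g' (map (\<lambda>f. f xs) (map \<phi> fs)) = g (map (\<lambda>f. f xs) fs)" if "length xs = n" for xs
    using that \<phi> g'(2) comp.hyps(2) by (simp cong: map_cong)
  ultimately show ?case by blast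
next
  case (prim_rec n g h)
  obtain g' where g': "orec Z n g'" "\<forall>xs. length xs = n \<longrightarrow> g' xs = g xs"
    using prim_rec.IH(1) by blast
  obtain h' where h': "orec Z (n + 2) h'" "\<forall>xs. length xs = n + 2 \<longrightarrow> h' xs = h xs"
    using prim_rec.IH(2) by blast
  have "rec_nat (g' (tl xs)) (\<lambda>k r. h' (k # r # tl xs)) j
      = rec_nat (g (tl xs)) (\<lambda>k r. h (k # r # tl xs)) j" if "length xs = Suc n" for xs j
    by (induction j) (use that g'(2) h'(2) in auto)
  then show ?case using orec.prim_rec[OF g'(1) h'(1)] by blast
next
  case (mu n f)
  obtain f' where f': "orec Z (Suc n) f'" "\<forall>xs. length xs = Suc n \<longrightarrow> f' xs = f xs"
    using mu.IH by blast
  have "orec Z n (\<lambda>xs. LEAST y. f' (y # xs) = 0)"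
    by (rule orec.mu[OF f'(1)]) (use mu.hyps(2) f'(2) in simp)
  then show ?case using f'(2) by (intro exI) auto
qed

lemma computable_in_relativize:
  assumes "computable_in Y p" and "Y \<le>\<^sub>T Z"
  shows "computable_in Z p"
proof -
  obtain f where "orec Y 1 f" "\<forall>x. f [x] = p x"
    using assms(1) unfolding computable_in_def by blast
  then show ?thesis
    using orec_relativize[OF _ assms(2)] unfolding computable_in_def by fastforce
qed

lemma turing_le_trans: "X \<le>\<^sub>T Y \<Longrightarrow> Y \<le>\<^sub>T Z \<Longrightarrow> X \<le>\<^sub>T Z"
  unfolding turing_le_def[of X] by (rule computable_in_relativize)

lemma computable_in_comp:
  assumes "computable_in Y p" and "computable_in Y q"
  shows "computable_in Y (p \<circ> q)"
proof -
  obtain f where f: "orec Y 1 f" "\<forall>x. f [x] = p x"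
    using assms(1) unfolding computable_in_def by blast
  obtain g where g: "orec Y 1 g" "\<forall>x. g [x] = q x"
    using assms(2) unfolding computable_in_def by blast
  have "orec Y 1 (\<lambda>xs. f (map (\<lambda>h. h xs) [g]))"
    by (rule orec.comp[OF f(1)]) (use g(1) in auto)
  then show ?thesis
    unfolding computable_in_def using f(2) g(2) by (intro exI) auto
qed

lemma inference_proc_computable_in:
  assumes "inference_proc S p" and "\<forall>q\<in>S. computable_in Y q"
  shows "computable_in Y p"
  using assms(1)
proof induction
  case (base p)
  then show ?case using assms(2) by blast
next
  case (compose p q)
  show ?case by (rule computable_in_comp[OF compose.IH])
qed

lemma decides_computable_in_imp_turing_le:
  assumes "decides p X" and "computable_in Y p"
  shows "X \<le>\<^sub>T Y"
proof -
  have "p = (\<lambda>x. if x \<in> X then 1 else 0)"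
    using assms(1) unfolding decides_def by auto
  then show ?thesis
    using assms(2) unfolding turing_le_def by simp
qed

lemma inference_realizable_imp_turing_le:
  assumes "settled_system Y S" and "inference_realizable S X"
  shows "X \<le>\<^sub>T Y"
proof -
  obtain p where "inference_proc S p" "decides p X"
    using assms(2) unfolding inference_realizable_def by blast
  moreover have "\<forall>q\<in>S. computable_in Y q"
    using assms(1) unfolding settled_system_def by blast
  ultimately show ?thesis
    using inference_proc_computable_in decides_computable_in_imp_turing_le by blast
qed

theorem mainTheorem8:
  fixes A B D :: "nat set" and SA SB :: "(nat \<Rightarrow> nat) set"
  assumes "settled_system A SA"
    and "settled_system B SB"
    and "A \<le>\<^sub>T B"
    and "externally_essential A D"
    and "inference_realizable SB D"
  shows "A <\<^sub>T B"
proof -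
  have "D \<le>\<^sub>T B"
    using inference_realizable_imp_turing_le[OF assms(2) assms(5)] .
  moreover have "\<not> D \<le>\<^sub>T A"
    using assms(4) unfolding externally_essential_def by blast
  ultimately have "\<not> B \<le>\<^sub>T A"
    using turing_le_trans by blast
  then show ?thesis
    using assms(3) unfolding turing_less_def by blast
qed

end
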